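(* Let $A$ be an AUF algebra and let $M,N$ be coherent left $A$-modules. Then $\dim\mathrm{Hom}_{A,-}(M,N)<\infty$.
   Context: All algebras are associative $\mathbb C$-algebras, not necessarily unital. An idempotent is $e$ with $e^2=e$. An algebra $A$ is AUF if there is a family $(e_i)_{i\in\mathfrak I}$ of mutually orthogonal idempotents with $\dim e_iAe_j<\infty$ and $A=\sum_{i,j}e_iAe_j$. A left $A$-module $M$ is quasicoherent if $\xi\in A\xi$ for all $\xi\in M$, and coherent if moreover finitely generated. $\mathrm{Hom}_{A,-}(M,N)$ denotes the space of left $A$-module homomorphisms. *)

theory Defs
  imports Complex_Main "HOL-Library.Function_Algebras"
begin

definition calg :: "(complex \<Rightarrow> 'a::ring \<Rightarrow> 'a) \<Rightarrow> bool" where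
  "calg sA \<longleftrightarrow> vector_space sA \<and>
     (\<forall>c x y. sA c (x * y) = sA c x * y \<and> sA c (x * y) = x * sA c y)"

definition fin_dim :: "(complex \<Rightarrow> 'v::ab_group_add \<Rightarrow> 'v) \<Rightarrow> 'v set \<Rightarrow> bool" where
  "fin_dim s S \<longleftrightarrow> (\<exists>B. finite B \<and> B \<subseteq> S \<and> S \<subseteq> module.span s B)"

definition idempotent :: "'a::ring \<Rightarrow> bool" where
  "idempotent x \<longleftrightarrow> x * x = x"

definition corner :: "'a::ring \<Rightarrow> 'a \<Rightarrow> 'a set" where
  "corner e f = {e * a * f | a. True}"

definition AUF_family :: "(complex \<Rightarrow> 'a::ring \<Rightarrow> 'a) \<Rightarrow> 'i set \<Rightarrow> ('i \<Rightarrow> 'a) \<Rightarrow> bool" where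
  "AUF_family sA I e \<longleftrightarrow>
     (\<forall>i\<in>I. idempotent (e i)) \<and>
     (\<forall>i\<in>I. \<forall>j\<in>I. i \<noteq> j \<longrightarrow> e i * e j = 0) \<and>
     (\<forall>i\<in>I. \<forall>j\<in>I. fin_dim sA (corner (e i) (e j))) \<and>
     (\<forall>a. \<exists>F x. finite F \<and> F \<subseteq> I \<times> I \<and>
            (\<forall>(i,j)\<in>F. x (i,j) \<in> corner (e i) (e j)) \<and> a = (\<Sum>p\<in>F. x p))"

definition lmod :: "(complex \<Rightarrow> 'a::ring \<Rightarrow> 'a) \<Rightarrow> (complex \<Rightarrow> 'm::ab_group_add \<Rightarrow> 'm)
                    \<Rightarrow> ('a \<Rightarrow> 'm \<Rightarrow> 'm) \<Rightarrow> bool" where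
  "lmod sA sM act \<longleftrightarrow> vector_space sM \<and>
     (\<forall>a b m. act (a * b) m = act a (act b m)) \<and>
     (\<forall>a b m. act (a + b) m = act a m + act b m) \<and>
     (\<forall>a m n. act a (m + n) = act a m + act a n) \<and>
     (\<forall>c a m. act (sA c a) m = sM c (act a m) \<and> act a (sM c m) = sM c (act a m))"

definition quasicoherent :: "('a \<Rightarrow> 'm \<Rightarrow> 'm) \<Rightarrow> bool" where
  "quasicoherent act \<longleftrightarrow> (\<forall>\<xi>. \<exists>a. act a \<xi> = \<xi>)"

definition fin_gen :: "(complex \<Rightarrow> 'm::ab_group_add \<Rightarrow> 'm) \<Rightarrow> ('a \<Rightarrow> 'm \<Rightarrow> 'm) \<Rightarrow> bool" where
  "fin_gen sM act \<longleftrightarrow> (\<exists>G. finite G \<and>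
     (\<forall>\<xi>. \<exists>a c. \<xi> = (\<Sum>g\<in>G. act (a g) g + sM (c g) g)))"

definition coherent :: "(complex \<Rightarrow> 'm::ab_group_add \<Rightarrow> 'm) \<Rightarrow> ('a \<Rightarrow> 'm \<Rightarrow> 'm) \<Rightarrow> bool" where
  "coherent sM act \<longleftrightarrow> quasicoherent act \<and> fin_gen sM act"

definition Hom_A :: "(complex \<Rightarrow> 'm::ab_group_add \<Rightarrow> 'm) \<Rightarrow> ('a \<Rightarrow> 'm \<Rightarrow> 'm)
                   \<Rightarrow> (complex \<Rightarrow> 'n::ab_group_add \<Rightarrow> 'n) \<Rightarrow> ('a \<Rightarrow> 'n \<Rightarrow> 'n)
                   \<Rightarrow> ('m \<Rightarrow> 'n) set" where
  "Hom_A sM actM sN actN =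
     {f. Vector_Spaces.linear sM sN f \<and> (\<forall>a \<xi>. f (actM a \<xi>) = actN a (f \<xi>))}"

definition fun_scale :: "(complex \<Rightarrow> 'n \<Rightarrow> 'n) \<Rightarrow> complex \<Rightarrow> ('m \<Rightarrow> 'n) \<Rightarrow> ('m \<Rightarrow> 'n)" where
  "fun_scale sN c f = (\<lambda>x. sN c (f x))"

end

theory Submission
  imports Defs
begin

(* Quasicoherence and the AUF decomposition give, for a finite generating set G of M, finitely
   many orthogonal idempotents e_l whose sum acts as the identity on G; in particular every
   element of M is an A-combination of G. A homomorphism f is therefore determined by its values
   on G, and each value f g = sum_l e_l (f g) lies in the finite sum of the spaces e_l N. Each
   e_l N is finite dimensional, being spanned by the vectors d h with h running over generators
   of N and d over bases of the finite-dimensional corners e_l A e_k. Restriction to G thus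
   embeds Hom(M, N) linearly into a finite-dimensional space. *)

lemma
  assumes "lmod sA sM act"
  shows lmod_vector_space: "vector_space sM"
    and lmod_act_mult: "act (a * b) m = act a (act b m)"
    and lmod_act_add_left: "act (a + b) m = act a m + act b m"
    and lmod_act_add_right: "act a (m + n) = act a m + act a n"
    and lmod_act_scale_left: "act (sA c a) m = sM c (act a m)"
    and lmod_act_scale_right: "act a (sM c m) = sM c (act a m)"
  using assms unfolding lmod_def by blast+

lemma lmod_act_sum_left:
  assumes "lmod sA sM act"
  shows "act (sum f S) m = (\<Sum>x\<in>S. act (f x) m)"
proof -
  have "act 0 m = 0"
    using lmod_act_add_left[OF assms, of 0 0 m] by simp
  then show ?thesis
    using sum_comp_morphism[of "\<lambda>a. act a m" f S] lmod_act_add_left[OF assms]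
    by (simp add: comp_def)
qed

lemma lmod_act_zero_right:
  assumes "lmod sA sM act"
  shows "act a 0 = 0"
  using lmod_act_add_right[OF assms, of a 0 0] by simp

lemma lmod_act_sum_right:
  assumes "lmod sA sM act"
  shows "act a (sum f S) = (\<Sum>x\<in>S. act a (f x))"
  using sum_comp_morphism[of "act a" f S] lmod_act_zero_right[OF assms]
    lmod_act_add_right[OF assms]
  by (simp add: comp_def)

lemma lmod_act_in_span_image:
  assumes "calg sA" and "lmod sA sM act" and "d \<in> module.span sA D"
  shows "act d m \<in> module.span sM ((\<lambda>d. act d m) ` D)"
proof -
  have "module_hom sA sM (\<lambda>d. act d m)"
    using assms(1,2) unfolding module_hom_iff module_iff_vector_space calg_def lmod_def
    by blast
  then show ?thesis
    using module_hom.span_image assms(3) by blast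
qed

lemma AUF_family_corner_left_unit:
  assumes "AUF_family sA I e" and "finite L" and "L \<subseteq> I" and "i \<in> L"
    and "x \<in> corner (e i) (e j)"
  shows "(\<Sum>k\<in>L. e k) * x = x"
proof -
  obtain a where x: "x = e i * a * e j"
    using assms(5) unfolding corner_def by blast
  have "e k * x = (if k = i then x else 0)" if "k \<in> L" for k
  proof (cases "k = i")
    case True
    then have "e k * e k = e k"
      using assms(1,3) that unfolding AUF_family_def idempotent_def by blast
    then show ?thesis
      using True x by (simp add: mult.assoc[symmetric])
  next
    case False
    then have "e k * e i = 0"
      using assms(1,3,4) that unfolding AUF_family_def by blast
    then show ?thesis
      using False x by (simp add: mult.assoc[symmetric])
  qed
  then show ?thesis
    using assms(2,4) by (simp add: sum_distrib_right)
qed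

lemma AUF_family_left_local_unit:
  assumes "AUF_family sA I e" and "finite X"
  obtains L where "finite L" "L \<subseteq> I" "\<forall>x\<in>X. (\<Sum>k\<in>L. e k) * x = x"
proof -
  have "\<forall>a. \<exists>F y. finite F \<and> F \<subseteq> I \<times> I \<and>
          (\<forall>p\<in>F. y p \<in> corner (e (fst p)) (e (snd p))) \<and> a = (\<Sum>p\<in>F. y p)"
    using assms(1) unfolding AUF_family_def by (simp add: case_prod_beta')
  then obtain F y where F: "\<And>a. finite (F a)" "\<And>a. F a \<subseteq> I \<times> I"
    and y: "\<And>a p. p \<in> F a \<Longrightarrow> y a p \<in> corner (e (fst p)) (e (snd p))"
    and sum_y: "\<And>a. a = (\<Sum>p\<in>F a. y a p)"
    by metis
  define L where "L = (\<Union>x\<in>X. fst ` F x)"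
  have "fst ` F x \<subseteq> I" for x
    using F(2) by force
  then have L: "finite L" "L \<subseteq> I"
    using F(1) assms(2) unfolding L_def by auto
  have "(\<Sum>k\<in>L. e k) * x = x" if "x \<in> X" for x
  proof -
    have "(\<Sum>k\<in>L. e k) * y x p = y x p" if "p \<in> F x" for p
    proof (rule AUF_family_corner_left_unit[OF assms(1) L])
      show "fst p \<in> L"
        using that \<open>x \<in> X\<close> unfolding L_def by blast
    qed (rule y[OF that])
    then have "(\<Sum>k\<in>L. e k) * (\<Sum>p\<in>F x. y x p) = (\<Sum>p\<in>F x. y x p)"
      by (simp add: sum_distrib_left)
    then show ?thesis
      using sum_y[of x] by metis
  qed
  then show ?thesis
    using L that by blast
qed

lemma quasicoherent_local_unit:
  assumes "AUF_family sA I e" and "lmod sA sM act" and "quasicoherent act" and "finite G"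
  obtains L where "finite L" "L \<subseteq> I" "\<forall>g\<in>G. act (\<Sum>k\<in>L. e k) g = g"
proof -
  obtain a where a: "\<And>g. act (a g) g = g"
    using choice[OF assms(3)[unfolded quasicoherent_def]] by blast
  obtain L where L: "finite L" "L \<subseteq> I" "\<forall>x\<in>a ` G. (\<Sum>k\<in>L. e k) * x = x"
    using AUF_family_left_local_unit[OF assms(1) finite_imageI[OF assms(4)]] by blast
  have "act (\<Sum>k\<in>L. e k) g = g" if "g \<in> G" for g
  proof -
    have "act (\<Sum>k\<in>L. e k) g = act ((\<Sum>k\<in>L. e k) * a g) g"
      using lmod_act_mult[OF assms(2)] a[of g] by simp
    also have "\<dots> = g"
      using L(3) that a[of g] by simp
    finally show ?thesis .
  qed
  then show ?thesis
    using L that by blast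
qed

lemma coherent_generated_by_action:
  assumes "AUF_family sA I e" and "lmod sA sM act" and "coherent sM act"
  obtains H L where "finite H" "finite L" "L \<subseteq> I" "\<forall>h\<in>H. act (\<Sum>l\<in>L. e l) h = h"
    "\<forall>m. \<exists>b. m = (\<Sum>h\<in>H. act (b h) h)"
proof -
  obtain H where H: "finite H" "\<forall>m. \<exists>a c. m = (\<Sum>h\<in>H. act (a h) h + sM (c h) h)"
    using assms(3) unfolding coherent_def fin_gen_def by blast
  obtain L where L: "finite L" "L \<subseteq> I" "\<forall>h\<in>H. act (\<Sum>l\<in>L. e l) h = h"
    using quasicoherent_local_unit[OF assms(1,2) _ H(1)] assms(3)
    unfolding coherent_def by blast
  have "\<exists>b. m = (\<Sum>h\<in>H. act (b h) h)" for m
  proof -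
    obtain a c where m: "m = (\<Sum>h\<in>H. act (a h) h + sM (c h) h)"
      using H(2) by blast
    have "act (a h) h + sM (c h) h = act (a h + sA (c h) (\<Sum>l\<in>L. e l)) h" if "h \<in> H" for h
      using L(3) that by (simp add: lmod_act_add_left[OF assms(2)] lmod_act_scale_left[OF assms(2)])
    then have "m = (\<Sum>h\<in>H. act (a h + sA (c h) (\<Sum>l\<in>L. e l)) h)"
      unfolding m by (rule sum.cong[OF refl])
    then show ?thesis
      by (rule exI[where x="\<lambda>h. a h + sA (c h) (\<Sum>l\<in>L. e l)"])
  qed
  then show ?thesis
    using H(1) L that by blast
qed

lemma corner_action_fin_dim:
  assumes "calg sA" and "AUF_family sA I e" and "lmod sA sM act" and "coherent sM act"
    and "i \<in> I"
  shows "fin_dim sM (range (act (e i)))"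
proof -
  interpret vector_space sM
    by (rule lmod_vector_space[OF assms(3)])
  obtain H L where H: "finite H" "\<forall>m. \<exists>b. m = (\<Sum>h\<in>H. act (b h) h)"
    and L: "finite L" "L \<subseteq> I" "\<forall>h\<in>H. act (\<Sum>l\<in>L. e l) h = h"
    using coherent_generated_by_action[OF assms(2,3,4)] by metis
  have "\<forall>l\<in>L. \<exists>D. finite D \<and> D \<subseteq> corner (e i) (e l) \<and> corner (e i) (e l) \<subseteq> module.span sA D"
    using assms(2,5) L(2) unfolding AUF_family_def fin_dim_def by blast
  then obtain D where D: "\<And>l. l \<in> L \<Longrightarrow> finite (D l)"
    "\<And>l. l \<in> L \<Longrightarrow> D l \<subseteq> corner (e i) (e l)"
    "\<And>l. l \<in> L \<Longrightarrow> corner (e i) (e l) \<subseteq> module.span sA (D l)"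
    by metis
  define C where "C = (\<Union>l\<in>L. \<Union>h\<in>H. (\<lambda>d. act d h) ` D l)"
  have "finite C"
    unfolding C_def using L(1) H(1) D(1) by blast
  moreover have "C \<subseteq> range (act (e i))"
  proof
    fix n assume "n \<in> C"
    then obtain l h d where "l \<in> L" "d \<in> corner (e i) (e l)" "n = act d h"
      unfolding C_def using D(2) by blast
    moreover have "e i * e i = e i"
      using assms(2,5) unfolding AUF_family_def idempotent_def by blast
    ultimately have "n = act (e i) n"
      unfolding corner_def by (auto simp: lmod_act_mult[OF assms(3), symmetric] mult.assoc[symmetric])
    then show "n \<in> range (act (e i))" by blast
  qed
  moreover have "act (e i) m \<in> span C" for m
  proof -
    obtain b where m: "m = (\<Sum>h\<in>H. act (b h) h)"
      using H(2) by blast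
    have "act (e i) (act (b h) h) = (\<Sum>l\<in>L. act (e i * b h * e l) h)" if "h \<in> H" for h
    proof -
      have "act (e i) (act (b h) h) = act (e i * b h * (\<Sum>l\<in>L. e l)) h"
        using L(3) that by (simp add: lmod_act_mult[OF assms(3)])
      then show ?thesis
        by (simp add: sum_distrib_left lmod_act_sum_left[OF assms(3)])
    qed
    moreover have "act (e i * b h * e l) h \<in> span C" if "h \<in> H" "l \<in> L" for h l
    proof -
      have "e i * b h * e l \<in> module.span sA (D l)"
        using D(3)[OF that(2)] unfolding corner_def by blast
      then have "act (e i * b h * e l) h \<in> span ((\<lambda>d. act d h) ` D l)"
        by (rule lmod_act_in_span_image[OF assms(1,3)])
      moreover have "(\<lambda>d. act d h) ` D l \<subseteq> C"
        unfolding C_def using that by blast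
      ultimately show ?thesis
        using span_mono by blast
    qed
    ultimately show ?thesis
      unfolding m lmod_act_sum_right[OF assms(3)] by (simp add: span_sum)
  qed
  ultimately show ?thesis
    unfolding fin_dim_def by blast
qed

lemma fin_dim_UN:
  assumes "vector_space s" and "finite L" and "\<And>l. l \<in> L \<Longrightarrow> fin_dim s (S l)"
  shows "fin_dim s (\<Union>l\<in>L. S l)"
proof -
  interpret vector_space s by fact
  obtain B where B: "\<And>l. l \<in> L \<Longrightarrow> finite (B l) \<and> B l \<subseteq> S l \<and> S l \<subseteq> span (B l)"
    using assms(3) unfolding fin_dim_def by metis
  have "S l \<subseteq> span (\<Union>l\<in>L. B l)" if "l \<in> L" for l
    using B[OF that] span_mono[of "B l" "\<Union>l\<in>L. B l"] that by blast
  then show ?thesis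
    unfolding fin_dim_def using B assms(2)
    by (intro exI[of _ "\<Union>l\<in>L. B l"]) blast
qed

lemma fin_dim_if_inj_on_into_finite_span:
  assumes "vector_space s" and "vector_space t" and "module.subspace s S"
    and "Vector_Spaces.linear s t \<phi>" and "inj_on \<phi> S"
    and "finite T" and "\<phi> ` S \<subseteq> module.span t T"
  shows "fin_dim s S"
proof -
  interpret vector_space_pair s t
    using assms(1,2) unfolding vector_space_pair_def by blast
  obtain B where B: "B \<subseteq> S" "vs1.independent B" "S \<subseteq> vs1.span B"
    by (rule vs1.maximal_independent_subset)
  have "vs1.span B \<subseteq> S"
    using vs1.span_minimal[OF B(1) assms(3)] .
  then have "vs2.independent (\<phi> ` B)"
    using linear_independent_injective_image[OF assms(4) B(2)] inj_on_subset[OF assms(5)]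
    by blast
  then have "finite (\<phi> ` B)"
    using vs2.independent_span_bound[OF assms(6)] B(1) assms(7) by blast
  then have "finite B"
    using finite_image_iff inj_on_subset[OF assms(5) B(1)] by blast
  then show ?thesis
    unfolding fin_dim_def using B(1,3) by blast
qed

lemma sum_fun_apply: "sum f S x = (\<Sum>s\<in>S. f s x)"
  for f :: "'b \<Rightarrow> 'c \<Rightarrow> 'd::comm_monoid_add"
  by (induction S rule: infinite_finite_induct) auto

lemma vector_space_fun_scale:
  "vector_space s \<Longrightarrow> vector_space (fun_scale s)"
  unfolding vector_space_def fun_scale_def by (auto simp: fun_eq_iff)

lemma fin_dim_fun_subspace_if_determined_on_finite:
  fixes S :: "('m \<Rightarrow> 'n::ab_group_add) set"
  assumes "vector_space s" and "module.subspace (fun_scale s) S" and "finite G" and "finite C"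
    and values_in_span: "\<And>f g. f \<in> S \<Longrightarrow> g \<in> G \<Longrightarrow> f g \<in> module.span s C"
    and determined: "\<And>f. f \<in> S \<Longrightarrow> \<forall>g\<in>G. f g = 0 \<Longrightarrow> f = 0"
  shows "fin_dim (fun_scale s) S"
proof -
  interpret N: vector_space s by fact
  interpret F: vector_space "fun_scale s"
    by (rule vector_space_fun_scale[OF assms(1)])
  define restr :: "('m \<Rightarrow> 'n) \<Rightarrow> 'm \<Rightarrow> 'n" where "restr f = (\<lambda>x. if x \<in> G then f x else 0)" for f
  define \<delta> :: "'m \<Rightarrow> 'n \<Rightarrow> 'm \<Rightarrow> 'n" where "\<delta> g v = (\<lambda>x. if x = g then v else 0)" for g v
  have "Vector_Spaces.linear (fun_scale s) (fun_scale s) restr"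
    unfolding Vector_Spaces.linear_iff using F.vector_space_axioms
    by (auto simp: restr_def fun_scale_def fun_eq_iff)
  moreover have "inj_on restr S"
  proof (rule inj_onI)
    fix f f' assume f: "f \<in> S" "f' \<in> S" and eq: "restr f = restr f'"
    have "(f - f') g = 0" if "g \<in> G" for g
      using fun_cong[OF eq, of g] that by (simp add: restr_def)
    then have "f - f' = 0"
      using determined[OF F.subspace_diff[OF assms(2) f]] by simp
    then show "f = f'"
      by simp
  qed
  moreover have "finite (\<Union>g\<in>G. \<delta> g ` C)"
    using assms(3,4) by simp
  moreover have "restr f \<in> F.span (\<Union>g\<in>G. \<delta> g ` C)" if "f \<in> S" for f
  proof -
    have "restr f = (\<Sum>g\<in>G. \<delta> g (f g))"
      by (auto simp: fun_eq_iff sum_fun_apply restr_def \<delta>_def assms(3) if_distrib cong: if_cong)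
    also have "\<dots> \<in> F.span (\<Union>g\<in>G. \<delta> g ` C)"
    proof (rule F.span_sum)
      fix g assume "g \<in> G"
      have \<delta>_hom: "module_hom s (fun_scale s) (\<delta> g)"
        unfolding module_hom_iff module_iff_vector_space
        using N.vector_space_axioms F.vector_space_axioms
        by (auto simp: \<delta>_def fun_scale_def fun_eq_iff)
      have "\<delta> g (f g) \<in> F.span (\<delta> g ` C)"
        using module_hom.span_image[OF \<delta>_hom] values_in_span[OF that \<open>g \<in> G\<close>] by blast
      moreover have "\<delta> g ` C \<subseteq> (\<Union>g\<in>G. \<delta> g ` C)"
        using \<open>g \<in> G\<close> by blast
      ultimately show "\<delta> g (f g) \<in> F.span (\<Union>g\<in>G. \<delta> g ` C)"
        using F.span_mono by blast
    qed
    finally show ?thesis .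
  qed
  ultimately show ?thesis
    by (intro fin_dim_if_inj_on_into_finite_span[OF F.vector_space_axioms
        F.vector_space_axioms assms(2)]) auto
qed

lemma Hom_A_subspace:
  assumes "lmod sA sM actM" and "lmod sA sN actN"
  shows "module.subspace (fun_scale sN) (Hom_A sM actM sN actN)"
proof -
  interpret vector_space_pair sM sN
    using lmod_vector_space[OF assms(1)] lmod_vector_space[OF assms(2)]
    unfolding vector_space_pair_def by blast
  interpret F: vector_space "fun_scale sN"
    by (rule vector_space_fun_scale[OF vs2.vector_space_axioms])
  show ?thesis
    unfolding F.subspace_def
  proof (intro conjI ballI allI)
    show "0 \<in> Hom_A sM actM sN actN"
      unfolding Hom_A_def zero_fun_def
      using linear_zero lmod_act_zero_right[OF assms(2)] by simp
  next
    fix f g assume "f \<in> Hom_A sM actM sN actN" "g \<in> Hom_A sM actM sN actN"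
    then show "f + g \<in> Hom_A sM actM sN actN"
      unfolding Hom_A_def plus_fun_def
      using linear_compose_add lmod_act_add_right[OF assms(2)] by simp
  next
    fix c f assume "f \<in> Hom_A sM actM sN actN"
    then show "fun_scale sN c f \<in> Hom_A sM actM sN actN"
      unfolding Hom_A_def fun_scale_def
      using linear_compose_scale_right lmod_act_scale_right[OF assms(2)] by simp
  qed
qed

lemma Hom_A_eq_0_if_vanishes_on_generators:
  assumes "lmod sA sN actN" and "f \<in> Hom_A sM actM sN actN"
    and "\<forall>m. \<exists>b. m = (\<Sum>g\<in>G. actM (b g) g)" and "\<forall>g\<in>G. f g = 0"
  shows "f = 0"
proof (rule ext)
  fix m
  obtain b where m: "m = (\<Sum>g\<in>G. actM (b g) g)"
    using assms(3) by blast
  have hom: "module_hom sM sN f" and commute: "\<And>a \<xi>. f (actM a \<xi>) = actN a (f \<xi>)"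
    using assms(2) unfolding Hom_A_def module_hom_iff_linear by auto
  have "f m = (\<Sum>g\<in>G. actN (b g) (f g))"
    unfolding m module_hom.sum[OF hom] commute ..
  also have "\<dots> = 0"
    using assms(4) lmod_act_zero_right[OF assms(1)] by simp
  finally show "f m = 0 m"
    by simp
qed

theorem proposition7p9:
  fixes sA :: "complex \<Rightarrow> 'a::ring \<Rightarrow> 'a"
    and I :: "'i set" and e :: "'i \<Rightarrow> 'a"
    and sM :: "complex \<Rightarrow> 'm::ab_group_add \<Rightarrow> 'm" and actM :: "'a \<Rightarrow> 'm \<Rightarrow> 'm"
    and sN :: "complex \<Rightarrow> 'n::ab_group_add \<Rightarrow> 'n" and actN :: "'a \<Rightarrow> 'n \<Rightarrow> 'n"
  assumes "calg sA"
    and "AUF_family sA I e"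
    and "lmod sA sM actM" and "coherent sM actM"
    and "lmod sA sN actN" and "coherent sN actN"
  shows "fin_dim (fun_scale sN) (Hom_A sM actM sN actN)"
proof -
  interpret N: vector_space sN
    by (rule lmod_vector_space[OF assms(5)])
  obtain G L where G: "finite G" "\<forall>m. \<exists>b. m = (\<Sum>g\<in>G. actM (b g) g)"
    and L: "finite L" "L \<subseteq> I" "\<forall>g\<in>G. actM (\<Sum>l\<in>L. e l) g = g"
    using coherent_generated_by_action[OF assms(2,3,4)] by metis
  have "fin_dim sN (\<Union>l\<in>L. range (actN (e l)))"
    using L(2) by (intro fin_dim_UN[OF N.vector_space_axioms L(1)]
        corner_action_fin_dim[OF assms(1,2,5,6)]) blast
  then obtain C where C: "finite C" "(\<Union>l\<in>L. range (actN (e l))) \<subseteq> N.span C"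
    unfolding fin_dim_def by blast
  show ?thesis
  proof (rule fin_dim_fun_subspace_if_determined_on_finite[OF N.vector_space_axioms
        Hom_A_subspace[OF assms(3,5)] G(1) C(1)])
    fix f g assume f: "f \<in> Hom_A sM actM sN actN" and "g \<in> G"
    then have "f g = f (actM (\<Sum>l\<in>L. e l) g)"
      using L(3) by simp
    also have "\<dots> = (\<Sum>l\<in>L. actN (e l) (f g))"
      using f lmod_act_sum_left[OF assms(5)] unfolding Hom_A_def by simp
    also have "\<dots> \<in> N.span C"
      using C(2) by (intro N.span_sum) blast
    finally show "f g \<in> N.span C" .
  next
    fix f assume "f \<in> Hom_A sM actM sN actN" "\<forall>g\<in>G. f g = 0"
    then show "f = 0"
      by (rule Hom_A_eq_0_if_vanishes_on_generators[OF assms(5) _ G(2)])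
  qed
qed

end
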